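(* In the discrete scheme described in the context, let $M'=\max_j|\theta^n_j|+\max_j|q^n_j|$. There is a constant $C>0$ depending only on $M'$, $T$ and $Q^{sat}$ such that for all $s<t$ in $[0,T)$ and all $z\in[0,1)$, $$(F^n(t,z)-F^n(s,z))^+\le C\big(\hat\theta^n(t,z)-\hat\theta^n(s,z)\big).$$
   Context: $Q^{sat}:\mathbb{R}^3\to\mathbb{R}$ is smooth with $\partial_\theta Q^{sat}>0$, $\partial_zQ^{sat}<0$. $\Theta(w,z,t)$ is the solution $\theta$ of $\theta+Q^{sat}(\theta,z,t)=w$ (assumed well defined), with $\partial_w\Theta>0$, $\partial_z\Theta>0$. Discrete scheme. Fix $T>0$, $n\ge1$, $\delta t>0$, $z_i=i/n$, $J_i=[\frac{i-1}n,\frac in)$. There are $n$ parcels $j=1,\dots,n$; initially parcel $j$ is at position $j$ with value $\theta^n_j$, where $\theta^n_1\le\dots\le\theta^n_n$ and $q^n_j\le Q^{sat}(\theta^n_j,z_j,0)$; parcel $j$ carries the fixed number $\theta^M_j=\theta^n_j+q^n_j$. One time step from $k\delta t$ to $(k+1)\delta t$, with $\tau=(k+1)\delta t$: positions $m=n,\dots,1$ are processed in this order. At stage $m$, with current configuration (parcel $p(i)$ at position $i$ with value $\vartheta_i$), position $i$ is wet if $\vartheta_i<\Theta(\theta^M_{p(i)},z_i,\tau)$; a wet position $i_0\le m$ is eligible if for every $i$ with $i_0<i\le m$, either $i$ is not wet and $\vartheta_i<\Theta(\theta^M_{p(i_0)},z_i,\tau)$, or $i$ is wet and $\theta^M_{p(i_0)}>\theta^M_{p(i)}$.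 If some position is eligible, let $i_*$ be the eligible position whose parcel has the largest $\theta^M$ (largest position in case of ties); that parcel moves to position $m$ with new value $\Theta(\theta^M_{p(i_* )},z_m,\tau)$, the parcels at $i_*+1,\dots,m$ move down one position keeping their values, others unchanged; otherwise nothing changes. After stage $1$ one has the configuration at time $(k+1)\delta t$. $\alpha_{k\delta t}(j)$ is the position of parcel $j$ after $k$ steps, $\theta^n_i(k\delta t)$ the value at position $i$. For $k\delta t\le t<(k+1)\delta t$ and $z\in J_j$: $\theta^n(t,z)=\theta^n_j(k\delta t)$, $F^n(t,z)=z-z_j+z_{\alpha_{k\delta t}(j)}$, and $\hat\theta^n(t,z)=\theta^n(t,F^n(t,z))$. *)

theory Defs
  imports "HOL-Analysis.Analysis"
begin

text \<open>A function is smooth if it is (Frechet) differentiable everywhere and every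
directional derivative function is again smooth (coinductively: derivatives of all orders exist).\<close>
coinductive smooth3 :: "(real \<times> real \<times> real \<Rightarrow> real) \<Rightarrow> bool" where
  "(\<And>x. (f has_derivative f' x) (at x)) \<Longrightarrow> (\<And>v. smooth3 (\<lambda>x. f' x v)) \<Longrightarrow> smooth3 f"

definition Theta :: "(real \<Rightarrow> real \<Rightarrow> real \<Rightarrow> real) \<Rightarrow> real \<Rightarrow> real \<Rightarrow> real \<Rightarrow> real" where
  "Theta Q w z t = (THE \<theta>. \<theta> + Q \<theta> z t = w)"

text \<open>A configuration: p i = parcel at position i, v i = value at position i (positions 1..n).
  thM j = theta^M_j, the number carried by parcel j.\<close>
type_synonym config = "(nat \<Rightarrow> nat) \<times> (nat \<Rightarrow> real)"

definition zpos :: "nat \<Rightarrow> nat \<Rightarrow> real" where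
  "zpos n i = real i / real n"

definition wet :: "(real \<Rightarrow> real \<Rightarrow> real \<Rightarrow> real) \<Rightarrow> nat \<Rightarrow> (nat \<Rightarrow> real) \<Rightarrow> real
    \<Rightarrow> config \<Rightarrow> nat \<Rightarrow> bool" where
  "wet Q n thM \<tau> c i = (snd c i < Theta Q (thM (fst c i)) (zpos n i) \<tau>)"

definition eligible :: "(real \<Rightarrow> real \<Rightarrow> real \<Rightarrow> real) \<Rightarrow> nat \<Rightarrow> (nat \<Rightarrow> real) \<Rightarrow> real
    \<Rightarrow> config \<Rightarrow> nat \<Rightarrow> nat \<Rightarrow> bool" where
  "eligible Q n thM \<tau> c m i0 =
     (1 \<le> i0 \<and> i0 \<le> m \<and> wet Q n thM \<tau> c i0 \<and>
      (\<forall>i. i0 < i \<and> i \<le> m \<longrightarrow>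
         (\<not> wet Q n thM \<tau> c i \<and> snd c i < Theta Q (thM (fst c i0)) (zpos n i) \<tau>) \<or>
         (wet Q n thM \<tau> c i \<and> thM (fst c i0) > thM (fst c i))))"

definition istar :: "(real \<Rightarrow> real \<Rightarrow> real \<Rightarrow> real) \<Rightarrow> nat \<Rightarrow> (nat \<Rightarrow> real) \<Rightarrow> real
    \<Rightarrow> config \<Rightarrow> nat \<Rightarrow> nat" where
  "istar Q n thM \<tau> c m =
     (GREATEST i. eligible Q n thM \<tau> c m i \<and>
        (\<forall>i'. eligible Q n thM \<tau> c m i' \<longrightarrow> thM (fst c i') \<le> thM (fst c i)))"

definition stage :: "(real \<Rightarrow> real \<Rightarrow> real \<Rightarrow> real) \<Rightarrow> nat \<Rightarrow> (nat \<Rightarrow> real) \<Rightarrow> real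
    \<Rightarrow> nat \<Rightarrow> config \<Rightarrow> config" where
  "stage Q n thM \<tau> m c =
     (if \<exists>i. eligible Q n thM \<tau> c m i then
        (let k = istar Q n thM \<tau> c m; (p, v) = c in
          (\<lambda>i. if i < k \<or> m < i then p i else if i < m then p (Suc i) else p k,
           \<lambda>i. if i < k \<or> m < i then v i else if i < m then v (Suc i)
                else Theta Q (thM (p k)) (zpos n m) \<tau>))
      else c)"

definition time_step :: "(real \<Rightarrow> real \<Rightarrow> real \<Rightarrow> real) \<Rightarrow> nat \<Rightarrow> (nat \<Rightarrow> real) \<Rightarrow> real
    \<Rightarrow> config \<Rightarrow> config" where
  "time_step Q n thM \<tau> c = fold (stage Q n thM \<tau>) (rev [1..<Suc n]) c"

fun config_at :: "(real \<Rightarrow> real \<Rightarrow> real \<Rightarrow> real) \<Rightarrow> nat \<Rightarrow> real \<Rightarrow> (nat \<Rightarrow> real) \<Rightarrow> (nat \<Rightarrow> real)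
    \<Rightarrow> nat \<Rightarrow> config" where
  "config_at Q n dt th0 q 0 = (\<lambda>i. i, th0)"
| "config_at Q n dt th0 q (Suc k) =
     time_step Q n (\<lambda>j. th0 j + q j) (real (Suc k) * dt) (config_at Q n dt th0 q k)"

definition alpha :: "(real \<Rightarrow> real \<Rightarrow> real \<Rightarrow> real) \<Rightarrow> nat \<Rightarrow> real \<Rightarrow> (nat \<Rightarrow> real) \<Rightarrow> (nat \<Rightarrow> real)
    \<Rightarrow> nat \<Rightarrow> nat \<Rightarrow> nat" where
  "alpha Q n dt th0 q k j = (THE i. 1 \<le> i \<and> i \<le> n \<and> fst (config_at Q n dt th0 q k) i = j)"

definition step_idx :: "real \<Rightarrow> real \<Rightarrow> nat" where
  "step_idx dt t = nat \<lfloor>t / dt\<rfloor>"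

definition cell_idx :: "nat \<Rightarrow> real \<Rightarrow> nat" where
  "cell_idx n z = nat \<lfloor>real n * z\<rfloor> + 1"

definition theta_n :: "(real \<Rightarrow> real \<Rightarrow> real \<Rightarrow> real) \<Rightarrow> nat \<Rightarrow> real \<Rightarrow> (nat \<Rightarrow> real) \<Rightarrow> (nat \<Rightarrow> real)
    \<Rightarrow> real \<Rightarrow> real \<Rightarrow> real" where
  "theta_n Q n dt th0 q t z = snd (config_at Q n dt th0 q (step_idx dt t)) (cell_idx n z)"

definition F_n :: "(real \<Rightarrow> real \<Rightarrow> real \<Rightarrow> real) \<Rightarrow> nat \<Rightarrow> real \<Rightarrow> (nat \<Rightarrow> real) \<Rightarrow> (nat \<Rightarrow> real)
    \<Rightarrow> real \<Rightarrow> real \<Rightarrow> real" where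
  "F_n Q n dt th0 q t z =
     z - zpos n (cell_idx n z) + zpos n (alpha Q n dt th0 q (step_idx dt t) (cell_idx n z))"

definition theta_hat :: "(real \<Rightarrow> real \<Rightarrow> real \<Rightarrow> real) \<Rightarrow> nat \<Rightarrow> real \<Rightarrow> (nat \<Rightarrow> real) \<Rightarrow> (nat \<Rightarrow> real)
    \<Rightarrow> real \<Rightarrow> real \<Rightarrow> real" where
  "theta_hat Q n dt th0 q t z = theta_n Q n dt th0 q t (F_n Q n dt th0 q t z)"

end

theory Submission
  imports Defs
begin

text \<open>Each stage of the scheme either does nothing or lifts one wet parcel from a position \<open>k\<close>
  to a position \<open>m \<ge> k\<close>, resetting its value to \<open>\<Theta>(\<theta>\<^sup>M, z\<^sub>m)\<close>, while the parcels in between sink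
  by one position and keep their values. Being wet, the lifted parcel had value below
  \<open>\<Theta>(\<theta>\<^sup>M, z\<^sub>k)\<close>. On the compact range of arguments that occurs, the implicit equation together
  with \<open>\<partial>\<^sub>z Q < 0\<close> and the continuity of the partial derivatives of \<open>Q\<close> gives
  \<open>\<partial>\<^sub>z\<Theta> \<ge> \<kappa>\<close> for a uniform \<open>\<kappa> > 0\<close>. Hence along the trajectory of every parcel both its value
  \<open>\<theta>\<close> and \<open>\<theta> - \<kappa> z\<close> are nondecreasing in time. Applied to the parcel that starts in the cell of
  \<open>z\<close>, whose height is \<open>F_n\<close> up to a fixed offset and whose value is \<open>theta_hat\<close>, this gives
  the claim with \<open>C = 1 / \<kappa>\<close>.\<close>

lemma has_real_derivative_along_line:
  fixes f :: "'a::real_normed_vector \<Rightarrow> real"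
  assumes f: "(f has_derivative f') (at (g x))" and g: "(g has_derivative (\<lambda>h. h *\<^sub>R v)) (at x)"
  shows "((\<lambda>s. f (g s)) has_real_derivative f' v) (at x)"
proof -
  have "((\<lambda>s. f (g s)) has_derivative (\<lambda>h. f' (h *\<^sub>R v))) (at x)"
    using has_derivative_compose[OF g f] by (simp add: o_def)
  moreover have "(\<lambda>h. f' (h *\<^sub>R v)) = (*) (f' v)"
    using linear.scaleR[OF has_derivative_linear[OF f]] by (auto simp: mult.commute)
  ultimately show ?thesis by (simp add: has_field_derivative_def)
qed

lemma smooth3_continuous: "smooth3 f \<Longrightarrow> continuous_on UNIV f"
  by (erule smooth3.cases) (metis continuous_at_imp_continuous_on has_derivative_continuous)

lemma smooth3_partial_derivatives:
  assumes "smooth3 (\<lambda>(a, b, c). Q a b c)"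
  obtains D1 D2 where "continuous_on UNIV D1" "continuous_on UNIV D2"
    "\<And>a b c. ((\<lambda>x. Q x b c) has_real_derivative D1 (a, b, c)) (at a)"
    "\<And>a b c. ((\<lambda>y. Q a y c) has_real_derivative D2 (a, b, c)) (at b)"
proof -
  obtain f' where f': "\<And>x. ((\<lambda>(a, b, c). Q a b c) has_derivative f' x) (at x)"
    and smooth': "\<And>v. smooth3 (\<lambda>x. f' x v)"
    using assms by (rule smooth3.cases) blast
  show ?thesis
  proof
    show "continuous_on UNIV (\<lambda>x. f' x (1, 0, 0))" "continuous_on UNIV (\<lambda>x. f' x (0, 1, 0))"
      by (rule smooth3_continuous[OF smooth'])+
    fix a b c :: real
    have "((\<lambda>x. (x, b, c)) has_derivative (\<lambda>h. h *\<^sub>R (1, 0, 0))) (at a)"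
      "((\<lambda>y. (a, y, c)) has_derivative (\<lambda>h. h *\<^sub>R (0, 1, 0))) (at b)"
      by (auto intro!: derivative_eq_intros simp: zero_prod_def)
    from this[THEN has_real_derivative_along_line[OF f']]
    show "((\<lambda>x. Q x b c) has_real_derivative f' (a, b, c) (1, 0, 0)) (at a)"
      "((\<lambda>y. Q a y c) has_real_derivative f' (a, b, c) (0, 1, 0)) (at b)"
      by simp_all
  qed
qed

lemma increment_le_of_derivative_le:
  fixes f :: "real \<Rightarrow> real"
  assumes "a \<le> b"
    and "\<And>x. a \<le> x \<Longrightarrow> x \<le> b \<Longrightarrow> (f has_real_derivative f' x) (at x)"
    and "\<And>x. a \<le> x \<Longrightarrow> x \<le> b \<Longrightarrow> f' x \<le> L"
  shows "f b - f a \<le> L * (b - a)"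
proof (cases "a = b")
  case False
  then obtain \<xi> where "a < \<xi>" "\<xi> < b" "f b - f a = (b - a) * f' \<xi>"
    using MVT2[of a b f f'] assms(1,2) by auto
  then show ?thesis using assms(3)[of \<xi>] \<open>a \<le> b\<close> by (simp add: mult.commute mult_left_mono)
qed simp

lemma compact_continuous_negative_bounded_away:
  fixes g :: "'a::topological_space \<Rightarrow> real"
  assumes "compact K" "continuous_on K g" "\<And>x. x \<in> K \<Longrightarrow> g x < 0"
  obtains a where "a > 0" "\<And>x. x \<in> K \<Longrightarrow> g x \<le> - a"
proof (cases "K = {}")
  case False
  then obtain x0 where "x0 \<in> K" "\<And>x. x \<in> K \<Longrightarrow> g x \<le> g x0"
    using continuous_attains_sup[OF assms(1) _ assms(2)] by blast
  then show ?thesis using that[of "- g x0"] assms(3) by force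
qed (use that[of 1] in simp)

text \<open>Two solutions of \<open>\<theta> + Q \<theta> z \<tau> = w\<close> at heights \<open>z \<le> z'\<close>: a decrease of \<open>Q\<close>
  in \<open>z\<close> at rate \<open>a\<close> must be compensated by \<open>\<theta> + Q \<theta> z' \<tau>\<close>, which grows at rate at most \<open>1 + L\<close>.\<close>
lemma solution_increment_ge:
  fixes Q :: "real \<Rightarrow> real \<Rightarrow> real \<Rightarrow> real"
  assumes sol: "\<theta> + Q \<theta> z \<tau> = w" "\<theta>' + Q \<theta>' z' \<tau> = w" and "z \<le> z'" "a \<ge> 0"
    and mono: "\<And>x y. x < y \<Longrightarrow> Q x z' \<tau> < Q y z' \<tau>"
    and deriv_z: "\<And>y. z \<le> y \<Longrightarrow> y \<le> z' \<Longrightarrow>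
      ((\<lambda>y. Q \<theta> y \<tau>) has_real_derivative Qz y) (at y) \<and> Qz y \<le> - a"
    and deriv_\<theta>: "\<And>x. \<theta> \<le> x \<Longrightarrow> x \<le> \<theta>' \<Longrightarrow>
      ((\<lambda>x. Q x z' \<tau>) has_real_derivative Q\<theta> x) (at x) \<and> Q\<theta> x \<le> L"
  shows "a * (z' - z) \<le> (1 + L) * (\<theta>' - \<theta>)"
proof -
  have drop: "Q \<theta> z' \<tau> - Q \<theta> z \<tau> \<le> - a * (z' - z)"
    using increment_le_of_derivative_le[OF \<open>z \<le> z'\<close>, of "\<lambda>y. Q \<theta> y \<tau>" Qz] deriv_z by blast
  have "\<theta> \<le> \<theta>'"
  proof (rule ccontr)
    assume "\<not> \<theta> \<le> \<theta>'"
    then have "Q \<theta>' z' \<tau> < Q \<theta> z' \<tau>" using mono by simp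
    moreover have "0 \<le> a * (z' - z)" using \<open>a \<ge> 0\<close> \<open>z \<le> z'\<close> by simp
    ultimately show False using sol drop \<open>\<not> \<theta> \<le> \<theta>'\<close> by linarith
  qed
  then have "Q \<theta>' z' \<tau> - Q \<theta> z' \<tau> \<le> L * (\<theta>' - \<theta>)"
    using increment_le_of_derivative_le[of \<theta> \<theta>' "\<lambda>x. Q x z' \<tau>" Q\<theta>] deriv_\<theta> by blast
  then show ?thesis using sol drop by (simp add: algebra_simps)
qed

lemma Theta_solves:
  assumes "\<exists>!\<theta>. \<theta> + Q \<theta> z t = w"
  shows "Theta Q w z t + Q (Theta Q w z t) z t = w"
  unfolding Theta_def by (rule theI'[OF assms])

lemma Theta_bounded:
  fixes Q :: "real \<Rightarrow> real \<Rightarrow> real \<Rightarrow> real"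
  assumes cont: "continuous_on UNIV (\<lambda>(a, b, c). Q a b c)"
    and mono: "\<And>x y z t. x < y \<Longrightarrow> Q x z t < Q y z t"
    and wd: "\<forall>w z t. \<exists>!\<theta>. \<theta> + Q \<theta> z t = w"
    and "compact S"
  obtains B where "\<And>w z t. \<bar>w\<bar> \<le> M \<Longrightarrow> (z, t) \<in> S \<Longrightarrow> \<bar>Theta Q w z t\<bar> \<le> B"
proof -
  have "continuous_on S ((\<lambda>(a, b, c). Q a b c) \<circ> Pair 0)"
    by (intro continuous_on_compose continuous_on_subset[OF cont] continuous_intros) auto
  then have "continuous_on S (\<lambda>(z, t). Q 0 z t)" by (simp add: o_def case_prod_unfold)
  then obtain m where m: "\<And>z t. (z, t) \<in> S \<Longrightarrow> \<bar>Q 0 z t\<bar> \<le> m"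
    using compact_imp_bounded[OF compact_continuous_image[OF _ \<open>compact S\<close>]]
    by (force simp: bounded_iff)
  show ?thesis
  proof
    fix w z t assume "\<bar>w\<bar> \<le> M" "(z, t) \<in> S"
    moreover have "Theta Q w z t + Q (Theta Q w z t) z t = w" using wd by (simp add: Theta_solves)
    moreover have "0 < Theta Q w z t \<Longrightarrow> Q 0 z t < Q (Theta Q w z t) z t"
      "Theta Q w z t < 0 \<Longrightarrow> Q (Theta Q w z t) z t < Q 0 z t" by (simp_all add: mono)
    ultimately show "\<bar>Theta Q w z t\<bar> \<le> M + m" using m[of z t] by linarith
  qed
qed

definition Theta_slope_ge :: "(real \<Rightarrow> real \<Rightarrow> real \<Rightarrow> real) \<Rightarrow> real \<Rightarrow> real \<Rightarrow> real \<Rightarrow> bool" where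
  "Theta_slope_ge Q \<kappa> w \<tau> \<longleftrightarrow>
     (\<forall>z z'. 0 \<le> z \<longrightarrow> z \<le> z' \<longrightarrow> z' \<le> 1 \<longrightarrow> \<kappa> * (z' - z) \<le> Theta Q w z' \<tau> - Theta Q w z \<tau>)"

lemma Theta_slope_uniform:
  fixes Q :: "real \<Rightarrow> real \<Rightarrow> real \<Rightarrow> real" and T M :: real
  assumes smooth: "smooth3 (\<lambda>(a, b, c). Q a b c)"
    and dQ_theta: "\<forall>\<theta> z t. \<exists>d. ((\<lambda>x. Q x z t) has_real_derivative d) (at \<theta>) \<and> d > 0"
    and dQ_z: "\<forall>\<theta> z t. \<exists>d. ((\<lambda>y. Q \<theta> y t) has_real_derivative d) (at z) \<and> d < 0"
    and wd: "\<forall>w z t. \<exists>!\<theta>. \<theta> + Q \<theta> z t = w"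
  shows "\<exists>\<kappa>>0. \<forall>w \<tau>. \<bar>w\<bar> \<le> M \<longrightarrow> 0 \<le> \<tau> \<longrightarrow> \<tau> \<le> T \<longrightarrow> Theta_slope_ge Q \<kappa> w \<tau>"
proof -
  obtain D1 D2 where cont: "continuous_on UNIV D1" "continuous_on UNIV D2"
    and D1: "\<And>a b c. ((\<lambda>x. Q x b c) has_real_derivative D1 (a, b, c)) (at a)"
    and D2: "\<And>a b c. ((\<lambda>y. Q a y c) has_real_derivative D2 (a, b, c)) (at b)"
    using smooth3_partial_derivatives[OF smooth] by blast
  have D2_neg: "D2 x < 0" for x
    using dQ_z DERIV_unique[OF D2] by (cases x) fastforce
  have mono: "\<And>x y z t. x < y \<Longrightarrow> Q x z t < Q y z t"
    using DERIV_pos_imp_increasing dQ_theta by blast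
  obtain B where B: "\<And>w z t. \<bar>w\<bar> \<le> M \<Longrightarrow> (z, t) \<in> {0..1} \<times> {0..T} \<Longrightarrow> \<bar>Theta Q w z t\<bar> \<le> B"
    using Theta_bounded[OF smooth3_continuous[OF smooth] mono wd, where M = M and S = "{0..1} \<times> {0..T}"]
    by (metis compact_Icc compact_Times)
  define K where "K = {-B..B} \<times> {0..1::real} \<times> {0..T}"
  have "compact K" unfolding K_def by (intro compact_Times compact_Icc)
  obtain L where "L > 0" and L: "\<And>x. x \<in> K \<Longrightarrow> D1 x \<le> L"
    using compact_imp_bounded[OF compact_continuous_image[OF continuous_on_subset[OF cont(1)] \<open>compact K\<close>]]
    by (force simp: bounded_pos)
  obtain a where "a > 0" and a: "\<And>x. x \<in> K \<Longrightarrow> D2 x \<le> - a"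
    using compact_continuous_negative_bounded_away[OF \<open>compact K\<close> continuous_on_subset[OF cont(2)]] D2_neg
    by blast
  have "Theta_slope_ge Q (a / (1 + L)) w \<tau>" if "\<bar>w\<bar> \<le> M" "0 \<le> \<tau>" "\<tau> \<le> T" for w \<tau>
    unfolding Theta_slope_ge_def
  proof (intro allI impI)
    fix z z' :: real assume z: "0 \<le> z" "z \<le> z'" "z' \<le> 1"
    let ?\<theta> = "Theta Q w z \<tau>" and ?\<theta>' = "Theta Q w z' \<tau>"
    have "\<bar>?\<theta>\<bar> \<le> B" "\<bar>?\<theta>'\<bar> \<le> B" using B that z by auto
    then have "a * (z' - z) \<le> (1 + L) * (?\<theta>' - ?\<theta>)"
      using z that \<open>a > 0\<close>
      by (intro solution_increment_ge[where Q = Q and \<theta> = ?\<theta> and \<theta>' = ?\<theta>' and w = w and \<tau> = \<tau>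
            and Q\<theta> = "\<lambda>x. D1 (x, z', \<tau>)" and Qz = "\<lambda>y. D2 (?\<theta>, y, \<tau>)"]
          Theta_solves wd[rule_format] mono conjI D1 D2 L a) (auto simp: K_def)
    then show "a / (1 + L) * (z' - z) \<le> ?\<theta>' - ?\<theta>"
      using \<open>L > 0\<close> by (simp add: field_simps)
  qed
  then show ?thesis using \<open>a > 0\<close> \<open>L > 0\<close> by (intro exI[of _ "a / (1 + L)"]) auto
qed

definition parcels_bij :: "nat \<Rightarrow> config \<Rightarrow> bool" where
  "parcels_bij n c \<longleftrightarrow> bij_betw (fst c) {1..n} {1..n}"

definition parcels_rise :: "nat \<Rightarrow> real \<Rightarrow> config \<Rightarrow> config \<Rightarrow> bool" where
  "parcels_rise n \<kappa> c c' \<longleftrightarrow>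
     (\<forall>i\<in>{1..n}. \<exists>i'\<in>{1..n}. fst c' i' = fst c i \<and> snd c i \<le> snd c' i' \<and>
        snd c i - \<kappa> * zpos n i \<le> snd c' i' - \<kappa> * zpos n i')"

lemma parcels_rise_refl: "parcels_rise n \<kappa> c c"
  unfolding parcels_rise_def by auto

lemma parcels_rise_trans: "parcels_rise n \<kappa> c1 c2 \<Longrightarrow> parcels_rise n \<kappa> c2 c3 \<Longrightarrow> parcels_rise n \<kappa> c1 c3"
  unfolding parcels_rise_def by (smt (verit, best))

text \<open>Position \<open>i\<close> after a stage that lifts the parcel at \<open>k\<close> to \<open>m\<close> holds the parcel
  that was at \<open>shift_down k m i\<close> before.\<close>
definition shift_down :: "nat \<Rightarrow> nat \<Rightarrow> nat \<Rightarrow> nat" where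
  "shift_down k m i = (if i < k \<or> m < i then i else if i < m then Suc i else k)"

lemma bij_betw_shift_down:
  assumes "1 \<le> k" "k \<le> m" "m \<le> n"
  shows "bij_betw (shift_down k m) {1..n} {1..n}"
proof -
  have inj: "inj_on (shift_down k m) {1..n}" and sub: "shift_down k m ` {1..n} \<subseteq> {1..n}"
    using assms unfolding shift_down_def inj_on_def by auto
  then show ?thesis using endo_inj_surj[OF _ sub inj] by (simp add: bij_betw_def)
qed

lemma eligible_istar:
  assumes "\<exists>i. eligible Q n thM \<tau> c m i"
  shows "eligible Q n thM \<tau> c m (istar Q n thM \<tau> c m)"
proof -
  let ?S = "{i. eligible Q n thM \<tau> c m i}"
  let ?P = "\<lambda>i. eligible Q n thM \<tau> c m i \<and>
      (\<forall>i'. eligible Q n thM \<tau> c m i' \<longrightarrow> thM (fst c i') \<le> thM (fst c i))"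
  have "finite ?S" by (rule finite_subset[of _ "{1..m}"]) (auto simp: eligible_def)
  then obtain i0 where "is_arg_min (\<lambda>i. - thM (fst c i)) (\<lambda>i. i \<in> ?S) i0"
    using assms ex_is_arg_min_if_finite by blast
  then have "?P i0" unfolding is_arg_min_def by force
  then have "?P (Greatest ?P)" by (rule GreatestI_nat) (auto simp: eligible_def)
  then show ?thesis unfolding istar_def by simp
qed

lemma stage_eligible:
  assumes "\<exists>i. eligible Q n thM \<tau> c m i" and k: "k = istar Q n thM \<tau> c m"
  shows "stage Q n thM \<tau> m c = (fst c \<circ> shift_down k m,
    (snd c \<circ> shift_down k m)(m := Theta Q (thM (fst c k)) (zpos n m) \<tau>))"
proof -
  have "k \<le> m" using eligible_istar[OF assms(1)] k by (simp add: eligible_def)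
  then show ?thesis
    using assms unfolding stage_def shift_down_def by (auto simp: Let_def case_prod_unfold fun_eq_iff)
qed

lemma stage_parcels_bij:
  assumes "parcels_bij n c" "m \<le> n"
  shows "parcels_bij n (stage Q n thM \<tau> m c)"
proof (cases "\<exists>i. eligible Q n thM \<tau> c m i")
  case True
  define k where "k = istar Q n thM \<tau> c m"
  have "1 \<le> k" "k \<le> m" using eligible_istar[OF True] by (simp_all add: k_def eligible_def)
  then have "bij_betw (fst c \<circ> shift_down k m) {1..n} {1..n}"
    using assms bij_betw_shift_down bij_betw_trans unfolding parcels_bij_def by blast
  then show ?thesis using stage_eligible[OF True k_def] by (simp add: parcels_bij_def)
qed (use assms in \<open>simp add: stage_def\<close>)

lemma zpos_mono: "i \<le> i' \<Longrightarrow> zpos n i \<le> zpos n i'"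
  by (simp add: zpos_def divide_right_mono)

lemma zpos_bounds: "i \<le> n \<Longrightarrow> 0 \<le> zpos n i \<and> zpos n i \<le> 1"
  by (auto simp: zpos_def divide_le_eq_1)

lemma stage_parcels_rise:
  assumes "parcels_bij n c" "m \<le> n" "\<kappa> \<ge> 0"
    and slope: "\<And>j. j \<in> {1..n} \<Longrightarrow> Theta_slope_ge Q \<kappa> (thM j) \<tau>"
  shows "parcels_rise n \<kappa> c (stage Q n thM \<tau> m c)"
proof (cases "\<exists>i. eligible Q n thM \<tau> c m i")
  case True
  define k where "k = istar Q n thM \<tau> c m"
  have k: "1 \<le> k" "k \<le> m" and wet: "snd c k < Theta Q (thM (fst c k)) (zpos n k) \<tau>"
    using eligible_istar[OF True] by (simp_all add: k_def eligible_def wet_def)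
  have "fst c k \<in> {1..n}" using assms(1,2) k unfolding parcels_bij_def bij_betw_def by auto
  then have lift: "\<kappa> * (zpos n m - zpos n k) \<le>
      Theta Q (thM (fst c k)) (zpos n m) \<tau> - Theta Q (thM (fst c k)) (zpos n k) \<tau>"
    using slope k \<open>m \<le> n\<close> zpos_mono zpos_bounds unfolding Theta_slope_ge_def by (meson order_trans)
  have "0 \<le> \<kappa> * (zpos n m - zpos n k)" using \<open>\<kappa> \<ge> 0\<close> k zpos_mono by simp
  have "\<exists>i'\<in>{1..n}. fst c (shift_down k m i') = fst c i \<and>
      snd c i \<le> ((snd c \<circ> shift_down k m)(m := Theta Q (thM (fst c k)) (zpos n m) \<tau>)) i' \<and>
      snd c i - \<kappa> * zpos n i \<le>
        ((snd c \<circ> shift_down k m)(m := Theta Q (thM (fst c k)) (zpos n m) \<tau>)) i' - \<kappa> * zpos n i'"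
    if i: "i \<in> {1..n}" for i
  proof -
    consider "i < k \<or> m < i" | "i = k" | "k < i" "i \<le> m" by linarith
    then show ?thesis
    proof cases
      case 1
      then show ?thesis using i k by (intro bexI[of _ i]) (auto simp: shift_down_def)
    next
      case 2
      then show ?thesis using i k \<open>m \<le> n\<close> lift \<open>0 \<le> \<kappa> * (zpos n m - zpos n k)\<close> wet
        by (intro bexI[of _ m]) (auto simp: shift_down_def algebra_simps)
    next
      case 3
      have "\<kappa> * zpos n (i - 1) \<le> \<kappa> * zpos n i"
        using \<open>\<kappa> \<ge> 0\<close> zpos_mono[of "i - 1" i n] by (simp add: mult_left_mono)
      then show ?thesis using 3 i k by (intro bexI[of _ "i - 1"]) (auto simp: shift_down_def)
    qed
  qed
  then show ?thesis using stage_eligible[OF True k_def] by (simp add: parcels_rise_def)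
qed (simp add: stage_def parcels_rise_refl)

lemma time_step_parcels_bij: "parcels_bij n c \<Longrightarrow> parcels_bij n (time_step Q n thM \<tau> c)"
  unfolding time_step_def
  by (rule fold_invariant[where Q = "\<lambda>m. m \<le> n"]) (auto intro: stage_parcels_bij)

lemma time_step_parcels_rise:
  assumes "parcels_bij n c" "\<kappa> \<ge> 0"
    and slope: "\<And>j. j \<in> {1..n} \<Longrightarrow> Theta_slope_ge Q \<kappa> (thM j) \<tau>"
  shows "parcels_rise n \<kappa> c (time_step Q n thM \<tau> c)"
proof -
  have "parcels_bij n (time_step Q n thM \<tau> c) \<and> parcels_rise n \<kappa> c (time_step Q n thM \<tau> c)"
    unfolding time_step_def
  proof (rule fold_invariant[where Q = "\<lambda>m. m \<le> n"])
    fix m c' assume "m \<le> n" "parcels_bij n c' \<and> parcels_rise n \<kappa> c c'"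
    then show "parcels_bij n (stage Q n thM \<tau> m c') \<and> parcels_rise n \<kappa> c (stage Q n thM \<tau> m c')"
      by (meson assms(2) slope stage_parcels_bij stage_parcels_rise parcels_rise_trans)
  qed (use assms(1) parcels_rise_refl in auto)
  then show ?thesis ..
qed

lemma config_at_parcels_bij: "parcels_bij n (config_at Q n dt th0 q k)"
proof (induction k)
  case 0
  then show ?case by (simp add: parcels_bij_def bij_betw_def)
qed (simp add: time_step_parcels_bij)

lemma config_at_parcels_rise:
  assumes "\<kappa> \<ge> 0" "dt > 0" "k1 \<le> k2" "real k2 * dt \<le> T"
    and slope: "\<And>j \<tau>. j \<in> {1..n} \<Longrightarrow> 0 \<le> \<tau> \<Longrightarrow> \<tau> \<le> T \<Longrightarrow> Theta_slope_ge Q \<kappa> (th0 j + q j) \<tau>"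
  shows "parcels_rise n \<kappa> (config_at Q n dt th0 q k1) (config_at Q n dt th0 q k2)"
  using \<open>k1 \<le> k2\<close> \<open>real k2 * dt \<le> T\<close>
proof (induction k2 rule: dec_induct)
  case base
  then show ?case by (simp add: parcels_rise_refl)
next
  case (step k)
  have "real k * dt \<le> real (Suc k) * dt" using \<open>dt > 0\<close> by simp
  then have "parcels_rise n \<kappa> (config_at Q n dt th0 q k1) (config_at Q n dt th0 q k)"
    using step by linarith
  moreover have "parcels_rise n \<kappa> (config_at Q n dt th0 q k) (config_at Q n dt th0 q (Suc k))"
    unfolding config_at.simps
  proof (rule time_step_parcels_rise[OF config_at_parcels_bij \<open>\<kappa> \<ge> 0\<close>], rule slope)
    show "0 \<le> real (Suc k) * dt" "real (Suc k) * dt \<le> T" using step.prems \<open>dt > 0\<close> by simp_all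
  qed
  ultimately show ?case by (rule parcels_rise_trans)
qed

lemma step_idx_mono: "dt > 0 \<Longrightarrow> s \<le> t \<Longrightarrow> step_idx dt s \<le> step_idx dt t"
  unfolding step_idx_def by (intro nat_mono floor_mono divide_right_mono) auto

lemma step_idx_le: "dt > 0 \<Longrightarrow> 0 \<le> t \<Longrightarrow> real (step_idx dt t) * dt \<le> t"
  unfolding step_idx_def by (simp add: pos_le_divide_eq[symmetric])

lemma cell_idx_range:
  assumes "0 \<le> z" "z < 1"
  shows "1 \<le> cell_idx n z \<and> (1 \<le> n \<longrightarrow> cell_idx n z \<le> n)"
proof -
  have "real n * z < real n" if "1 \<le> n" using that assms by simp
  then show ?thesis unfolding cell_idx_def using assms by linarith
qed

lemma config_at_position:
  assumes "i \<in> {1..n}" "fst (config_at Q n dt th0 q k) i = j"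
  shows "alpha Q n dt th0 q k j = i"
  unfolding alpha_def
proof (rule the_equality)
  have "inj_on (fst (config_at Q n dt th0 q k)) {1..n}"
    using config_at_parcels_bij unfolding parcels_bij_def bij_betw_def by blast
  moreover fix i' assume "1 \<le> i' \<and> i' \<le> n \<and> fst (config_at Q n dt th0 q k) i' = j"
  ultimately show "i' = i" using assms by (metis atLeastAtMost_iff inj_onD)
qed (use assms in auto)

lemma cell_idx_shift:
  assumes "1 \<le> n" "0 \<le> z" "i \<ge> 1"
  shows "cell_idx n (z - zpos n (cell_idx n z) + zpos n i) = i"
proof -
  let ?j = "cell_idx n z"
  have "real n * (z - zpos n ?j + zpos n i) = real n * z + of_int (int i - int ?j)"
    using assms by (simp add: zpos_def field_simps)
  then have "\<lfloor>real n * (z - zpos n ?j + zpos n i)\<rfloor> = \<lfloor>real n * z\<rfloor> + (int i - int ?j)"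
    by (simp only: floor_add_int[symmetric])
  moreover have "\<lfloor>real n * z\<rfloor> = int ?j - 1" using assms by (simp add: cell_idx_def)
  ultimately have "\<lfloor>real n * (z - zpos n ?j + zpos n i)\<rfloor> = int i - 1" by simp
  then show ?thesis using assms by (simp add: cell_idx_def)
qed

lemma F_n_theta_hat_at_position:
  assumes "1 \<le> n" "0 \<le> z" "i \<in> {1..n}"
    and "fst (config_at Q n dt th0 q (step_idx dt t)) i = cell_idx n z"
  shows "F_n Q n dt th0 q t z = z - zpos n (cell_idx n z) + zpos n i"
    and "theta_hat Q n dt th0 q t z = snd (config_at Q n dt th0 q (step_idx dt t)) i"
proof -
  show F: "F_n Q n dt th0 q t z = z - zpos n (cell_idx n z) + zpos n i"
    using config_at_position[OF assms(3,4)] by (simp add: F_n_def)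
  show "theta_hat Q n dt th0 q t z = snd (config_at Q n dt th0 q (step_idx dt t)) i"
    using cell_idx_shift assms by (simp add: theta_hat_def theta_n_def F)
qed

lemma F_n_increment_le_theta_hat_increment:
  assumes n: "1 \<le> n" and dt: "dt > 0" and "\<kappa> > 0"
    and st: "0 \<le> s" "s \<le> t" "t \<le> T" and z: "0 \<le> z" "z < 1"
    and slope: "\<And>j \<tau>. j \<in> {1..n} \<Longrightarrow> 0 \<le> \<tau> \<Longrightarrow> \<tau> \<le> T \<Longrightarrow> Theta_slope_ge Q \<kappa> (th0 j + q j) \<tau>"
  shows "max (F_n Q n dt th0 q t z - F_n Q n dt th0 q s z) 0
    \<le> 1 / \<kappa> * (theta_hat Q n dt th0 q t z - theta_hat Q n dt th0 q s z)"
proof -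
  let ?cs = "config_at Q n dt th0 q (step_idx dt s)" and ?ct = "config_at Q n dt th0 q (step_idx dt t)"
  have "real (step_idx dt t) * dt \<le> T" using step_idx_le[OF dt, of t] st by linarith
  then have rise: "parcels_rise n \<kappa> ?cs ?ct"
    using step_idx_mono[OF dt] st \<open>\<kappa> > 0\<close> dt slope by (intro config_at_parcels_rise) auto
  have "cell_idx n z \<in> fst ?cs ` {1..n}"
    using config_at_parcels_bij cell_idx_range[OF z] n unfolding parcels_bij_def bij_betw_def by auto
  then obtain i where i: "i \<in> {1..n}" "fst ?cs i = cell_idx n z" by auto
  then obtain i' where i': "i' \<in> {1..n}" "fst ?ct i' = cell_idx n z"
    and rises: "snd ?cs i \<le> snd ?ct i'" "snd ?cs i - \<kappa> * zpos n i \<le> snd ?ct i' - \<kappa> * zpos n i'"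
    using rise unfolding parcels_rise_def by metis
  have "max (zpos n i' - zpos n i) 0 \<le> 1 / \<kappa> * (snd ?ct i' - snd ?cs i)"
    using rises \<open>\<kappa> > 0\<close> by (simp add: field_simps)
  then show ?thesis
    using F_n_theta_hat_at_position[OF n z(1) i] F_n_theta_hat_at_position[OF n z(1) i'] by simp
qed

theorem lemma4p13:
  fixes Q :: "real \<Rightarrow> real \<Rightarrow> real \<Rightarrow> real" and T M' :: real
  assumes smooth: "smooth3 (\<lambda>(a, b, c). Q a b c)"
    and dQ_theta: "\<forall>\<theta> z t. \<exists>d. ((\<lambda>x. Q x z t) has_real_derivative d) (at \<theta>) \<and> d > 0"
    and dQ_z: "\<forall>\<theta> z t. \<exists>d. ((\<lambda>y. Q \<theta> y t) has_real_derivative d) (at z) \<and> d < 0"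
    and Theta_wd: "\<forall>w z t. \<exists>!\<theta>. \<theta> + Q \<theta> z t = w"
    and dTheta_w: "\<forall>w z t. \<exists>d. ((\<lambda>x. Theta Q x z t) has_real_derivative d) (at w) \<and> d > 0"
    and dTheta_z: "\<forall>w z t. \<exists>d. ((\<lambda>y. Theta Q w y t) has_real_derivative d) (at z) \<and> d > 0"
    and T: "T > 0"
  shows "\<exists>C>0. \<forall>(n::nat) (dt::real) (th0::nat \<Rightarrow> real) (q::nat \<Rightarrow> real).
           1 \<le> n \<longrightarrow> dt > 0 \<longrightarrow>
           (\<forall>i j. 1 \<le> i \<longrightarrow> i \<le> j \<longrightarrow> j \<le> n \<longrightarrow> th0 i \<le> th0 j) \<longrightarrow>
           (\<forall>j. 1 \<le> j \<longrightarrow> j \<le> n \<longrightarrow> q j \<le> Q (th0 j) (zpos n j) 0) \<longrightarrow>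
           M' = (MAX j\<in>{1..n}. \<bar>th0 j\<bar>) + (MAX j\<in>{1..n}. \<bar>q j\<bar>) \<longrightarrow>
           (\<forall>s t z. 0 \<le> s \<longrightarrow> s < t \<longrightarrow> t < T \<longrightarrow> 0 \<le> z \<longrightarrow> z < 1 \<longrightarrow>
              max (F_n Q n dt th0 q t z - F_n Q n dt th0 q s z) 0
                \<le> C * (theta_hat Q n dt th0 q t z - theta_hat Q n dt th0 q s z))"
proof -
  obtain \<kappa> where "\<kappa> > 0"
    and \<kappa>: "\<And>w \<tau>. \<bar>w\<bar> \<le> M' \<Longrightarrow> 0 \<le> \<tau> \<Longrightarrow> \<tau> \<le> T \<Longrightarrow> Theta_slope_ge Q \<kappa> w \<tau>"
    using Theta_slope_uniform[OF smooth dQ_theta dQ_z Theta_wd, where M = M' and T = T] by blast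
  show ?thesis
  proof (intro exI[of _ "1 / \<kappa>"] conjI allI impI)
    show "1 / \<kappa> > 0" using \<open>\<kappa> > 0\<close> by simp
    fix n :: nat and dt :: real and th0 q :: "nat \<Rightarrow> real" and s t z :: real
    assume "1 \<le> n" "dt > 0"
      and "\<forall>i j. 1 \<le> i \<longrightarrow> i \<le> j \<longrightarrow> j \<le> n \<longrightarrow> th0 i \<le> th0 j"
      and "\<forall>j. 1 \<le> j \<longrightarrow> j \<le> n \<longrightarrow> q j \<le> Q (th0 j) (zpos n j) 0"
      and M': "M' = (MAX j\<in>{1..n}. \<bar>th0 j\<bar>) + (MAX j\<in>{1..n}. \<bar>q j\<bar>)"
      and "0 \<le> s" "s < t" "t < T" "0 \<le> z" "z < 1"
    have "\<bar>th0 j + q j\<bar> \<le> M'" if "j \<in> {1..n}" for j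
    proof -
      have "\<bar>th0 j\<bar> \<le> (MAX j\<in>{1..n}. \<bar>th0 j\<bar>)" "\<bar>q j\<bar> \<le> (MAX j\<in>{1..n}. \<bar>q j\<bar>)"
        using that by (auto intro!: Max_ge)
      then show ?thesis unfolding M' by linarith
    qed
    then show "max (F_n Q n dt th0 q t z - F_n Q n dt th0 q s z) 0
        \<le> 1 / \<kappa> * (theta_hat Q n dt th0 q t z - theta_hat Q n dt th0 q s z)"
      using \<kappa> \<open>\<kappa> > 0\<close> \<open>1 \<le> n\<close> \<open>dt > 0\<close> \<open>0 \<le> s\<close> \<open>s < t\<close> \<open>t < T\<close> \<open>0 \<le> z\<close> \<open>z < 1\<close>
      by (intro F_n_increment_le_theta_hat_increment) auto
  qed
qed

end
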